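(* Let $0<s<\tfrac12$ and $\gamma_2(s)=\frac{2-2^{-2s}}{1-2^{-2s}}$. For every $h\in\mathcal{H}$, $$\mathcal{E}^\delta_s(h)=\gamma_2(s)\,|I(h)|^{-2s}.$$
   Context: Let $\mathbb{R}^+=(0,\infty)$. Dyadic intervals. $\mathcal{D}$ is the family of dyadic intervals $I^j_k=(k2^{-j},(k+1)2^{-j}]$ with $j\in\mathbb{Z}$ and $k$ a nonnegative integer. Dyadic distance. $\delta(x,y)=\inf\{|I|:I\in\mathcal{D},\ x,y\in I\}$ for $x,y\in\mathbb{R}^+$. Haar system. $\mathcal{H}$ consists of the functions $h_I(x)=2^{j/2}h(2^jx-k)$ for $I=I^j_k\in\mathcal{D}$, where $h=\chi_{(0,1/2]}-\chi_{(1/2,1]}$. For $h=h_I$ write $I(h)=I$. Energy form. $\mathcal{E}^\delta_s(\varphi)=\iint_{(\mathbb{R}^+)^2}\frac{|\varphi(x)-\varphi(y)|^2}{\delta(x,y)^{2s}}\,\frac{dx\,dy}{\delta(x,y)}$. *)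

theory Defs
  imports "HOL-Analysis.Analysis"
begin

definition dyadic_interval :: "int \<Rightarrow> nat \<Rightarrow> real set" where
  "dyadic_interval j k = {real k * 2 powr (- real_of_int j) <.. (real k + 1) * 2 powr (- real_of_int j)}"

definition dyadic_len :: "int \<Rightarrow> real" where
  "dyadic_len j = 2 powr (- real_of_int j)"

definition dyadic_dist :: "real \<Rightarrow> real \<Rightarrow> real" where
  "dyadic_dist x y = Inf {dyadic_len j | j k. x \<in> dyadic_interval j k \<and> y \<in> dyadic_interval j k}"

definition haar_mother :: "real \<Rightarrow> real" where
  "haar_mother x = indicator {0<..1/2} x - indicator {1/2<..1} x"

definition haar :: "int \<Rightarrow> nat \<Rightarrow> real \<Rightarrow> real" where
  "haar j k x = 2 powr (real_of_int j / 2) * haar_mother (2 powr (real_of_int j) * x - real k)"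

definition energy :: "real \<Rightarrow> (real \<Rightarrow> real) \<Rightarrow> ennreal" where
  "energy s \<phi> = (\<integral>\<^sup>+ p. ennreal (indicator ({0<..} \<times> {0<..}) p *
       ((\<phi> (fst p) - \<phi> (snd p))\<^sup>2 / (dyadic_dist (fst p) (snd p) powr (2 * s) * dyadic_dist (fst p) (snd p))))
     \<partial>(lborel \<Otimes>\<^sub>M lborel))"

definition gamma2 :: "real \<Rightarrow> real" where
  "gamma2 s = (2 - 2 powr (- 2 * s)) / (1 - 2 powr (- 2 * s))"

end

theory Submission
  imports Defs
begin

text \<open>Write \<open>I = I\<^sup>j\<^sub>k\<close> with halves \<open>I\<^sub>l, I\<^sub>r\<close>. On \<open>I \<times> I\<close> the integrand vanishes except on
  \<open>I\<^sub>l \<times> I\<^sub>r\<close> and its mirror image, where \<open>\<delta> = |I|\<close> and \<open>|h(x) - h(y)|\<^sup>2 = 4/|I|\<close>. Off \<open>I \<times> I\<close> it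
  vanishes unless one point lies in \<open>I\<close>; if the other lies in the shell \<open>S\<^sub>m\<close> of points whose smallest
  dyadic interval shared with \<open>I\<close> has length \<open>2\<^sup>m\<^sup>+\<^sup>1|I|\<close>, then \<open>|h(x) - h(y)|\<^sup>2 = 1/|I|\<close> and
  \<open>\<delta> = 2\<^sup>m\<^sup>+\<^sup>1|I|\<close>. So the integrand is constant on these blocks, and integrating block by block gives
  \<open>2|I|\<^sup>-\<^sup>2\<^sup>s + \<Sum>\<^sub>m (2\<^sup>m\<^sup>+\<^sup>1|I|)\<^sup>-\<^sup>2\<^sup>s\<close>, a geometric series with ratio \<open>2\<^sup>-\<^sup>2\<^sup>s\<close>.\<close>

lemma dyadic_interval_iff:
  "x \<in> dyadic_interval j k \<longleftrightarrow> real k < 2 powr real_of_int j * x \<and> 2 powr real_of_int j * x \<le> real k + 1"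
proof -
  have "(2::real) powr (- real_of_int j) = inverse (2 powr real_of_int j)"
    by (simp add: powr_minus)
  moreover have "0 < (2::real) powr real_of_int j" by simp
  ultimately show ?thesis
    unfolding dyadic_interval_def by (simp only:) (auto simp: field_simps)
qed

lemma dyadic_interval_unique:
  assumes "x \<in> dyadic_interval j k" "x \<in> dyadic_interval j k'"
  shows "k = k'"
proof -
  have "real k < real k' + 1" "real k' < real k + 1"
    using assms unfolding dyadic_interval_iff by linarith+
  then show ?thesis by linarith
qed

lemma dyadic_interval_parent:
  assumes "x \<in> dyadic_interval j k"
  shows "x \<in> dyadic_interval (j - 1) (k div 2)"
proof -
  have half: "(2::real) powr real_of_int (j - 1) * x = 2 powr real_of_int j * x / 2"
    by (simp add: powr_diff)
  have "2 * real (k div 2) \<le> real k" "real k + 1 \<le> 2 * real (k div 2) + 2"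
    by linarith+
  then show ?thesis
    using assms unfolding dyadic_interval_iff half by auto
qed

lemma dyadic_interval_ancestor:
  assumes "x \<in> dyadic_interval j k"
  shows "x \<in> dyadic_interval (j - int n) (k div 2 ^ n)"
proof (induction n)
  case 0
  then show ?case using assms by simp
next
  case (Suc n)
  then have "x \<in> dyadic_interval (j - int n - 1) (k div 2 ^ n div 2)"
    by (rule dyadic_interval_parent)
  moreover have "k div 2 ^ n div 2 = k div 2 ^ Suc n"
    using div_exp_eq[of k n 1] by (simp only: power_one_right Suc_eq_plus1)
  ultimately show ?case by (simp add: algebra_simps)
qed

lemma two_powr_succ: "(2::real) powr real_of_int (j + 1) = 2 * 2 powr real_of_int j"
  by (simp add: powr_add)

lemma dyadic_interval_children:
  "dyadic_interval j k = dyadic_interval (j + 1) (2 * k) \<union> dyadic_interval (j + 1) (2 * k + 1)"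
  unfolding set_eq_iff Un_iff dyadic_interval_iff two_powr_succ by auto

lemma dyadic_interval_pos: "dyadic_interval j k \<subseteq> {0<..}"
proof
  fix x assume "x \<in> dyadic_interval j k"
  then have "real k * 2 powr (- real_of_int j) < x"
    unfolding dyadic_interval_def by simp
  moreover have "0 \<le> real k * 2 powr (- real_of_int j)"
    by simp
  ultimately have "0 < x"
    by linarith
  then show "x \<in> {0<..}"
    by simp
qed

lemma sets_dyadic_interval [measurable]: "dyadic_interval j k \<in> sets lborel"
  unfolding dyadic_interval_def by simp

lemma emeasure_dyadic_interval: "emeasure lborel (dyadic_interval j k) = ennreal (dyadic_len j)"
proof -
  have "real k * 2 powr (- real_of_int j) \<le> (real k + 1) * 2 powr (- real_of_int j)"
    by (simp add: mult_right_mono)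
  then show ?thesis
    unfolding dyadic_interval_def dyadic_len_def by (simp add: algebra_simps)
qed

lemma dyadic_len_pos: "0 < dyadic_len j"
  unfolding dyadic_len_def by simp

lemma dyadic_len_diff: "dyadic_len (j - int n) = 2 ^ n * dyadic_len j"
proof -
  have "dyadic_len (j - int n) = 2 powr real n * 2 powr (- real_of_int j)"
    unfolding dyadic_len_def by (simp add: powr_add[symmetric])
  then show ?thesis unfolding dyadic_len_def by (simp add: powr_realpow)
qed

lemma dyadic_len_succ: "dyadic_len (j + 1) = dyadic_len j / 2"
proof -
  have "- real_of_int (j + 1) = - real_of_int j + - 1"
    by simp
  then have "dyadic_len (j + 1) = 2 powr (- real_of_int j) * 2 powr (- 1)"
    unfolding dyadic_len_def by (simp only: powr_add)
  moreover have "(2::real) powr (- 1) = 1 / 2"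
    by (rule powr_neg_one) simp
  ultimately show ?thesis
    unfolding dyadic_len_def by simp
qed

lemma dyadic_dist_eq_dyadic_len:
  assumes "x \<in> dyadic_interval j k" "y \<in> dyadic_interval j k"
    and "\<And>k'. \<not> (x \<in> dyadic_interval (j + 1) k' \<and> y \<in> dyadic_interval (j + 1) k')"
  shows "dyadic_dist x y = dyadic_len j"
  unfolding dyadic_dist_def
proof (rule cInf_eq_minimum)
  show "dyadic_len j \<in> {dyadic_len j' |j' k'. x \<in> dyadic_interval j' k' \<and> y \<in> dyadic_interval j' k'}"
    using assms(1,2) by blast
next
  fix t assume "t \<in> {dyadic_len j' |j' k'. x \<in> dyadic_interval j' k' \<and> y \<in> dyadic_interval j' k'}"
  then obtain j' k' where t: "t = dyadic_len j'"
    and xy: "x \<in> dyadic_interval j' k'" "y \<in> dyadic_interval j' k'"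
    by blast
  have "j' \<le> j"
  proof (rule ccontr)
    assume "\<not> j' \<le> j"
    define n where "n = nat (j' - (j + 1))"
    have "j' - int n = j + 1"
      using \<open>\<not> j' \<le> j\<close> unfolding n_def by simp
    then have "x \<in> dyadic_interval (j + 1) (k' div 2 ^ n)" "y \<in> dyadic_interval (j + 1) (k' div 2 ^ n)"
      using dyadic_interval_ancestor[OF xy(1), of n] dyadic_interval_ancestor[OF xy(2), of n] by simp_all
    then show False
      using assms(3) by blast
  qed
  then show "dyadic_len j \<le> t" unfolding t dyadic_len_def by simp
qed

lemma dyadic_dist_commute: "dyadic_dist x y = dyadic_dist y x"
  unfolding dyadic_dist_def by (simp add: conj_commute)

definition dyadic_ancestor :: "int \<Rightarrow> nat \<Rightarrow> nat \<Rightarrow> real set" where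
  "dyadic_ancestor j k m = dyadic_interval (j - int m) (k div 2 ^ m)"

definition dyadic_shell :: "int \<Rightarrow> nat \<Rightarrow> nat \<Rightarrow> real set" where
  "dyadic_shell j k m = dyadic_ancestor j k (Suc m) - dyadic_ancestor j k m"

lemma dyadic_ancestor_0 [simp]: "dyadic_ancestor j k 0 = dyadic_interval j k"
  unfolding dyadic_ancestor_def by simp

lemma sets_dyadic_ancestor [measurable]: "dyadic_ancestor j k m \<in> sets lborel"
  unfolding dyadic_ancestor_def by (rule sets_dyadic_interval)

lemma sets_dyadic_shell [measurable]: "dyadic_shell j k m \<in> sets lborel"
  unfolding dyadic_shell_def by (intro sets.Diff sets_dyadic_ancestor)

lemma dyadic_ancestor_mono:
  assumes "m \<le> m'"
  shows "dyadic_ancestor j k m \<subseteq> dyadic_ancestor j k m'"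
proof
  fix x assume "x \<in> dyadic_ancestor j k m"
  then have "x \<in> dyadic_interval (j - int m - int (m' - m)) (k div 2 ^ m div 2 ^ (m' - m))"
    unfolding dyadic_ancestor_def by (rule dyadic_interval_ancestor)
  moreover have "k div 2 ^ m div 2 ^ (m' - m) = k div 2 ^ m'"
    using assms by (simp add: div_exp_eq)
  moreover have "j - int m - int (m' - m) = j - int m'"
    using assms by simp
  ultimately show "x \<in> dyadic_ancestor j k m'"
    unfolding dyadic_ancestor_def by simp
qed

lemma dyadic_shell_pos: "dyadic_shell j k m \<subseteq> {0<..}"
  unfolding dyadic_shell_def dyadic_ancestor_def using dyadic_interval_pos by blast

lemma dyadic_shell_disjoint_interval: "dyadic_shell j k m \<inter> dyadic_interval j k = {}"
  unfolding dyadic_shell_def using dyadic_ancestor_mono[of 0 m j k] by auto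

lemma disjoint_family_dyadic_shell: "disjoint_family (dyadic_shell j k)"
proof -
  have "dyadic_shell j k a \<inter> dyadic_shell j k b = {}" if "a < b" for a b
    using that dyadic_ancestor_mono[of "Suc a" b j k] unfolding dyadic_shell_def by auto
  then show ?thesis
    unfolding disjoint_family_on_def by (metis Int_commute nat_neq_iff)
qed

lemma dyadic_ancestor_covers:
  assumes "0 < y"
  shows "\<exists>m. y \<in> dyadic_ancestor j k m"
proof -
  obtain n :: nat where n: "y * 2 powr real_of_int j < real n"
    using reals_Archimedean2 by blast
  define N where "N = max n (Suc k)"
  have "y * 2 powr real_of_int j < real N"
    using n unfolding N_def by simp
  also have "real N < real (2 ^ N)"
    using less_exp[of N] by (simp only: of_nat_less_iff)
  finally have "y * 2 powr real_of_int j \<le> 2 ^ N"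
    by simp
  then have "2 powr real_of_int j * y / 2 ^ N \<le> 1"
    by (simp add: field_simps)
  moreover have "0 < 2 powr real_of_int j * y / 2 ^ N"
    using assms by simp
  moreover have "k < 2 ^ N"
    using less_exp[of N] unfolding N_def by linarith
  then have "k div 2 ^ N = 0"
    by simp
  moreover have "(2::real) powr real_of_int (j - int N) = 2 powr real_of_int j / 2 ^ N"
    by (simp add: powr_diff powr_realpow)
  ultimately have "y \<in> dyadic_ancestor j k N"
    unfolding dyadic_ancestor_def dyadic_interval_iff by simp
  then show ?thesis by blast
qed

lemma dyadic_shell_covers:
  assumes "0 < y" "y \<notin> dyadic_interval j k"
  shows "\<exists>m. y \<in> dyadic_shell j k m"
proof -
  define n where "n = (LEAST n. y \<in> dyadic_ancestor j k n)"
  have y_n: "y \<in> dyadic_ancestor j k n"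
    unfolding n_def using dyadic_ancestor_covers[OF assms(1)] by (rule LeastI_ex)
  then obtain m where n: "n = Suc m"
    using assms(2) by (cases n) auto
  then have "y \<notin> dyadic_ancestor j k m"
    using not_less_Least[of m "\<lambda>n. y \<in> dyadic_ancestor j k n"] unfolding n_def by auto
  then show ?thesis using y_n n unfolding dyadic_shell_def by blast
qed

lemma dyadic_dist_shell:
  assumes "x \<in> dyadic_interval j k" "y \<in> dyadic_shell j k m"
  shows "dyadic_dist x y = dyadic_len (j - int (Suc m))"
proof (rule dyadic_dist_eq_dyadic_len)
  have "x \<in> dyadic_ancestor j k (Suc m)" and x_m: "x \<in> dyadic_ancestor j k m"
    using dyadic_ancestor_mono[of 0 _ j k] assms(1) by auto
  then show "x \<in> dyadic_interval (j - int (Suc m)) (k div 2 ^ Suc m)"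
    unfolding dyadic_ancestor_def by simp
  show "y \<in> dyadic_interval (j - int (Suc m)) (k div 2 ^ Suc m)"
    using assms(2) unfolding dyadic_shell_def dyadic_ancestor_def by blast
  fix k'
  show "\<not> (x \<in> dyadic_interval (j - int (Suc m) + 1) k' \<and> y \<in> dyadic_interval (j - int (Suc m) + 1) k')"
  proof
    assume "x \<in> dyadic_interval (j - int (Suc m) + 1) k' \<and> y \<in> dyadic_interval (j - int (Suc m) + 1) k'"
    then have "x \<in> dyadic_interval (j - int m) k'" "y \<in> dyadic_interval (j - int m) k'" by simp_all
    moreover have "k' = k div 2 ^ m"
      using dyadic_interval_unique calculation(1) x_m unfolding dyadic_ancestor_def by blast
    ultimately have "y \<in> dyadic_ancestor j k m" unfolding dyadic_ancestor_def by simp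
    then show False using assms(2) unfolding dyadic_shell_def by blast
  qed
qed

lemma emeasure_dyadic_shell: "emeasure lborel (dyadic_shell j k m) = ennreal (2 ^ m * dyadic_len j)"
proof -
  have "emeasure lborel (dyadic_shell j k m)
      = emeasure lborel (dyadic_ancestor j k (Suc m)) - emeasure lborel (dyadic_ancestor j k m)"
    unfolding dyadic_shell_def
    by (intro emeasure_Diff sets_dyadic_ancestor dyadic_ancestor_mono)
      (simp_all add: dyadic_ancestor_def emeasure_dyadic_interval)
  also have "\<dots> = ennreal (dyadic_len (j - int (Suc m)) - dyadic_len (j - int m))"
    unfolding dyadic_ancestor_def emeasure_dyadic_interval
    by (rule ennreal_minus) (simp add: dyadic_len_pos less_imp_le)
  also have "dyadic_len (j - int (Suc m)) - dyadic_len (j - int m) = 2 ^ m * dyadic_len j"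
    unfolding dyadic_len_diff by simp
  finally show ?thesis .
qed

lemma haar_left_child:
  assumes "x \<in> dyadic_interval (j + 1) (2 * k)"
  shows "haar j k x = 2 powr (real_of_int j / 2)"
  using assms unfolding dyadic_interval_iff two_powr_succ haar_def haar_mother_def
  by (auto simp: indicator_def)

lemma haar_right_child:
  assumes "x \<in> dyadic_interval (j + 1) (2 * k + 1)"
  shows "haar j k x = - (2 powr (real_of_int j / 2))"
  using assms unfolding dyadic_interval_iff two_powr_succ haar_def haar_mother_def
  by (auto simp: indicator_def)

lemma haar_outside:
  assumes "x \<notin> dyadic_interval j k"
  shows "haar j k x = 0"
  using assms unfolding dyadic_interval_iff haar_def haar_mother_def by (auto simp: indicator_def)

lemma haar_height_sq: "(2 powr (real_of_int j / 2))\<^sup>2 = 1 / dyadic_len j"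
proof -
  have "(2 powr (real_of_int j / 2))\<^sup>2 * dyadic_len j
      = 2 powr (real_of_int j / 2 + real_of_int j / 2 + - real_of_int j)"
    unfolding dyadic_len_def power2_eq_square by (simp only: powr_add)
  then show ?thesis
    using dyadic_len_pos[of j] by (simp add: field_simps)
qed

lemma haar_sq:
  assumes "x \<in> dyadic_interval j k"
  shows "(haar j k x)\<^sup>2 = 1 / dyadic_len j"
proof -
  have "x \<in> dyadic_interval (j + 1) (2 * k) \<or> x \<in> dyadic_interval (j + 1) (2 * k + 1)"
    using assms dyadic_interval_children[of j k] by blast
  then show ?thesis
    using haar_left_child haar_right_child haar_height_sq by auto
qed

definition energy_density :: "real \<Rightarrow> (real \<Rightarrow> real) \<Rightarrow> real \<times> real \<Rightarrow> ennreal" where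
  "energy_density s \<phi> p = ennreal (indicator ({0<..} \<times> {0<..}) p *
     ((\<phi> (fst p) - \<phi> (snd p))\<^sup>2 / (dyadic_dist (fst p) (snd p) powr (2 * s) * dyadic_dist (fst p) (snd p))))"

lemma energy_eq_nn_integral_density:
  "energy s \<phi> = (\<integral>\<^sup>+ p. energy_density s \<phi> p \<partial>(lborel \<Otimes>\<^sub>M lborel))"
  unfolding energy_def energy_density_def ..

definition dyadic_kernel :: "real \<Rightarrow> real \<Rightarrow> real" where
  "dyadic_kernel s d = 1 / (d powr (2 * s) * d)"

lemma dyadic_kernel_mult_self:
  assumes "0 < d"
  shows "d * dyadic_kernel s d = d powr (- 2 * s)"
  using assms unfolding dyadic_kernel_def by (simp add: powr_minus divide_inverse)

lemma energy_density_pos: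
  assumes "0 < x" "0 < y"
  shows "energy_density s \<phi> (x, y) = ennreal ((\<phi> x - \<phi> y)\<^sup>2 * dyadic_kernel s (dyadic_dist x y))"
  using assms unfolding energy_density_def dyadic_kernel_def by simp

lemma energy_density_nonpos:
  assumes "\<not> (0 < x \<and> 0 < y)"
  shows "energy_density s \<phi> (x, y) = 0"
  using assms unfolding energy_density_def by auto

lemma energy_density_commute: "energy_density s \<phi> (x, y) = energy_density s \<phi> (y, x)"
  unfolding energy_density_def
  by (simp add: dyadic_dist_commute[of x] power2_commute[of "\<phi> x"] indicator_def conj_commute)

definition sym_indicator :: "'a set \<Rightarrow> 'a set \<Rightarrow> 'a \<times> 'a \<Rightarrow> ennreal" where
  "sym_indicator X Y p = indicator (X \<times> Y) p + indicator (Y \<times> X) p"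

lemma sym_indicator_commute: "sym_indicator X Y (x, y) = sym_indicator X Y (y, x)"
  unfolding sym_indicator_def by (auto simp: indicator_def)

lemma borel_measurable_sym_indicator [measurable]:
  assumes [measurable]: "X \<in> sets M" "Y \<in> sets M"
  shows "sym_indicator X Y \<in> borel_measurable (M \<Otimes>\<^sub>M M)"
  unfolding sym_indicator_def by measurable

lemma nn_integral_sym_indicator:
  assumes "sigma_finite_measure M" and [measurable]: "X \<in> sets M" "Y \<in> sets M"
  shows "(\<integral>\<^sup>+ p. c * sym_indicator X Y p \<partial>(M \<Otimes>\<^sub>M M)) = 2 * c * emeasure M X * emeasure M Y"
proof -
  have "(\<integral>\<^sup>+ p. c * sym_indicator X Y p \<partial>(M \<Otimes>\<^sub>M M))
      = (\<integral>\<^sup>+ p. c * indicator (X \<times> Y) p \<partial>(M \<Otimes>\<^sub>M M)) + (\<integral>\<^sup>+ p. c * indicator (Y \<times> X) p \<partial>(M \<Otimes>\<^sub>M M))"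
    unfolding sym_indicator_def distrib_left by (rule nn_integral_add) measurable
  also have "\<dots> = c * (emeasure M X * emeasure M Y) + c * (emeasure M Y * emeasure M X)"
    using sigma_finite_measure.emeasure_pair_measure_Times[OF assms(1) assms(2,3)]
      sigma_finite_measure.emeasure_pair_measure_Times[OF assms(1) assms(3,2)]
    by (simp add: nn_integral_cmult_indicator)
  finally show ?thesis
    by (simp add: mult_2 algebra_simps)
qed

lemma suminf_sym_indicator_disjoint_family:
  assumes "disjoint_family S" "\<And>m. X \<inter> S m = {}" "x \<in> X" "y \<in> S n"
  shows "(\<Sum>m. c m * sym_indicator X (S m) (x, y)) = c n"
proof -
  have "c m * sym_indicator X (S m) (x, y) = (if m = n then c n else 0)" for m
    using assms unfolding disjoint_family_on_def sym_indicator_def by (auto simp: indicator_def)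
  then have "(\<Sum>m. c m * sym_indicator X (S m) (x, y)) = (\<Sum>m. if m = n then c n else 0)"
    by simp
  also have "\<dots> = c n"
    using sums_unique[OF sums_single[of n c]] by (simp cong: if_cong)
  finally show ?thesis .
qed

lemma energy_density_same_value:
  assumes "\<phi> x = \<phi> y"
  shows "energy_density s \<phi> (x, y) = 0"
  using assms unfolding energy_density_def by simp

lemma haar_energy_density_children:
  assumes "x \<in> dyadic_interval (j + 1) (2 * k)" "y \<in> dyadic_interval (j + 1) (2 * k + 1)"
  shows "energy_density s (haar j k) (x, y) = ennreal (4 / dyadic_len j * dyadic_kernel s (dyadic_len j))"
proof -
  have "x \<in> dyadic_interval j k" "y \<in> dyadic_interval j k"
    using assms dyadic_interval_children[of j k] by blast+
  moreover have "\<not> (x \<in> dyadic_interval (j + 1) k' \<and> y \<in> dyadic_interval (j + 1) k')" for k'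
    using assms dyadic_interval_unique[of x "j + 1" k' "2 * k"] dyadic_interval_unique[of y "j + 1" k' "2 * k + 1"]
    by auto
  ultimately have "dyadic_dist x y = dyadic_len j"
    by (rule dyadic_dist_eq_dyadic_len)
  moreover have "(haar j k x - haar j k y)\<^sup>2 = 4 / dyadic_len j"
    using haar_left_child[OF assms(1)] haar_right_child[OF assms(2)] haar_height_sq[of j]
    by (simp add: power2_eq_square algebra_simps)
  moreover have "0 < x" "0 < y"
    using assms dyadic_interval_pos by blast+
  ultimately show ?thesis
    by (simp add: energy_density_pos)
qed

lemma haar_energy_density_shell:
  assumes "x \<in> dyadic_interval j k" "y \<in> dyadic_shell j k m"
  shows "energy_density s (haar j k) (x, y)
    = ennreal (dyadic_kernel s (dyadic_len (j - int (Suc m))) / dyadic_len j)"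
proof -
  have "y \<notin> dyadic_interval j k" "0 < x" "0 < y"
    using assms dyadic_shell_disjoint_interval dyadic_interval_pos dyadic_shell_pos by blast+
  then show ?thesis
    using dyadic_dist_shell[OF assms(1,2)] haar_sq[OF assms(1)] haar_outside
    by (simp add: energy_density_pos)
qed

definition haar_energy_blocks :: "real \<Rightarrow> int \<Rightarrow> nat \<Rightarrow> real \<times> real \<Rightarrow> ennreal" where
  "haar_energy_blocks s j k p =
     ennreal (4 / dyadic_len j * dyadic_kernel s (dyadic_len j))
       * sym_indicator (dyadic_interval (j + 1) (2 * k)) (dyadic_interval (j + 1) (2 * k + 1)) p
     + (\<Sum>m. ennreal (dyadic_kernel s (dyadic_len (j - int (Suc m))) / dyadic_len j)
       * sym_indicator (dyadic_interval j k) (dyadic_shell j k m) p)"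

lemma haar_energy_blocks_commute: "haar_energy_blocks s j k (x, y) = haar_energy_blocks s j k (y, x)"
  unfolding haar_energy_blocks_def by (simp only: sym_indicator_commute[of _ _ x])

lemma sym_indicator_dyadic_shell_eq_0:
  assumes "x \<in> dyadic_interval j k \<longleftrightarrow> y \<in> dyadic_interval j k"
  shows "sym_indicator (dyadic_interval j k) (dyadic_shell j k m) (x, y) = 0"
  using assms dyadic_shell_disjoint_interval[of j k m] unfolding sym_indicator_def
  by (auto simp: indicator_def)

lemma haar_energy_density_outside:
  assumes "x \<notin> dyadic_interval j k" "y \<notin> dyadic_interval j k"
  shows "energy_density s (haar j k) (x, y) = haar_energy_blocks s j k (x, y)"
proof -
  have "sym_indicator (dyadic_interval (j + 1) (2 * k)) (dyadic_interval (j + 1) (2 * k + 1)) (x, y) = 0"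
    using assms dyadic_interval_children[of j k] unfolding sym_indicator_def by auto
  then show ?thesis
    using assms haar_outside[of x j k] haar_outside[of y j k]
    by (simp add: haar_energy_blocks_def sym_indicator_dyadic_shell_eq_0 energy_density_same_value)
qed

lemma haar_energy_density_inside_outside:
  assumes x: "x \<in> dyadic_interval j k" and y: "y \<notin> dyadic_interval j k"
  shows "energy_density s (haar j k) (x, y) = haar_energy_blocks s j k (x, y)"
proof -
  have children: "sym_indicator (dyadic_interval (j + 1) (2 * k)) (dyadic_interval (j + 1) (2 * k + 1)) (x, y) = 0"
    using y dyadic_interval_children[of j k] unfolding sym_indicator_def by auto
  show ?thesis
  proof (cases "0 < y")
    case True
    then obtain m where m: "y \<in> dyadic_shell j k m"
      using dyadic_shell_covers y by blast
    have "(\<Sum>m. ennreal (dyadic_kernel s (dyadic_len (j - int (Suc m))) / dyadic_len j)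
        * sym_indicator (dyadic_interval j k) (dyadic_shell j k m) (x, y))
      = ennreal (dyadic_kernel s (dyadic_len (j - int (Suc m))) / dyadic_len j)"
      using disjoint_family_dyadic_shell dyadic_shell_disjoint_interval x m
      by (intro suminf_sym_indicator_disjoint_family) (auto simp: Int_commute)
    then show ?thesis
      using haar_energy_density_shell[OF x m] children by (simp add: haar_energy_blocks_def)
  next
    case False
    then have "y \<notin> dyadic_shell j k m" for m
      using dyadic_shell_pos by fastforce
    then have "sym_indicator (dyadic_interval j k) (dyadic_shell j k m) (x, y) = 0" for m
      using y unfolding sym_indicator_def by auto
    then show ?thesis
      using False children by (simp add: haar_energy_blocks_def energy_density_nonpos)
  qed
qed

lemma haar_energy_density_inside:
  assumes x: "x \<in> dyadic_interval j k" and y: "y \<in> dyadic_interval j k"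
  shows "energy_density s (haar j k) (x, y) = haar_energy_blocks s j k (x, y)"
proof -
  let ?Il = "dyadic_interval (j + 1) (2 * k)" and ?Ir = "dyadic_interval (j + 1) (2 * k + 1)"
  have split: "z \<in> ?Il \<longleftrightarrow> z \<notin> ?Ir" if "z \<in> dyadic_interval j k" for z
    using that dyadic_interval_children[of j k] dyadic_interval_unique[of z "j + 1" "2 * k" "2 * k + 1"]
    by auto
  have shells: "haar_energy_blocks s j k (x, y)
      = ennreal (4 / dyadic_len j * dyadic_kernel s (dyadic_len j)) * sym_indicator ?Il ?Ir (x, y)"
    using x y by (simp add: haar_energy_blocks_def sym_indicator_dyadic_shell_eq_0)
  consider "x \<in> ?Il \<longleftrightarrow> y \<in> ?Il" | "x \<in> ?Il" "y \<in> ?Ir" | "y \<in> ?Il" "x \<in> ?Ir"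
    using split x y by blast
  then show ?thesis
  proof cases
    case 1
    then have "haar j k x = haar j k y"
      using split x y haar_left_child haar_right_child by metis
    moreover have "sym_indicator ?Il ?Ir (x, y) = 0"
      using 1 split x y unfolding sym_indicator_def by auto
    ultimately show ?thesis
      using shells by (simp add: energy_density_same_value)
  next
    case 2
    then have "sym_indicator ?Il ?Ir (x, y) = 1"
      using split x unfolding sym_indicator_def by auto
    then show ?thesis
      using shells haar_energy_density_children[OF 2] by simp
  next
    case 3
    then have "sym_indicator ?Il ?Ir (x, y) = 1"
      using split y unfolding sym_indicator_def by auto
    then show ?thesis
      using shells haar_energy_density_children[OF 3] energy_density_commute by simp
  qed
qed

lemma haar_energy_density_eq_blocks:
  "energy_density s (haar j k) p = haar_energy_blocks s j k p"
proof -
  obtain x y where p: "p = (x, y)"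
    by fastforce
  consider "x \<in> dyadic_interval j k" | "x \<notin> dyadic_interval j k" "y \<in> dyadic_interval j k"
    | "x \<notin> dyadic_interval j k" "y \<notin> dyadic_interval j k"
    by blast
  then show ?thesis
    using haar_energy_density_inside haar_energy_density_inside_outside haar_energy_density_outside
      haar_energy_density_inside_outside[of y j k x] energy_density_commute haar_energy_blocks_commute
    unfolding p by cases metis+
qed

lemma dyadic_kernel_nonneg: "0 < d \<Longrightarrow> 0 \<le> dyadic_kernel s d"
  unfolding dyadic_kernel_def by simp

lemma ennreal_triple_mult:
  assumes "0 \<le> a" "0 \<le> b" "0 \<le> c"
  shows "2 * ennreal a * ennreal b * ennreal c = ennreal (2 * a * b * c)"
  using assms by (simp add: ennreal_mult)

lemma nn_integral_haar_children_block:
  "(\<integral>\<^sup>+ p. ennreal (4 / dyadic_len j * dyadic_kernel s (dyadic_len j))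
      * sym_indicator (dyadic_interval (j + 1) (2 * k)) (dyadic_interval (j + 1) (2 * k + 1)) p
    \<partial>(lborel \<Otimes>\<^sub>M lborel)) = ennreal (2 * dyadic_len j powr (- 2 * s))"
  (is "?I = _")
proof -
  let ?L = "dyadic_len j"
  have L: "0 < ?L"
    by (rule dyadic_len_pos)
  have "?I = 2 * ennreal (4 / ?L * dyadic_kernel s ?L) * ennreal (?L / 2) * ennreal (?L / 2)"
    by (simp only: nn_integral_sym_indicator[OF lborel.sigma_finite_measure_axioms] sets_dyadic_interval
        emeasure_dyadic_interval dyadic_len_succ)
  also have "\<dots> = ennreal (2 * (4 / ?L * dyadic_kernel s ?L) * (?L / 2) * (?L / 2))"
    using L by (intro ennreal_triple_mult) (simp_all add: dyadic_kernel_nonneg)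
  also have "2 * (4 / ?L * dyadic_kernel s ?L) * (?L / 2) * (?L / 2) = 2 * (?L * dyadic_kernel s ?L)"
    using L by (simp add: field_simps)
  finally show ?thesis
    using L by (simp add: dyadic_kernel_mult_self)
qed

lemma nn_integral_haar_shell_block:
  "(\<integral>\<^sup>+ p. ennreal (dyadic_kernel s (dyadic_len (j - int (Suc m))) / dyadic_len j)
      * sym_indicator (dyadic_interval j k) (dyadic_shell j k m) p
    \<partial>(lborel \<Otimes>\<^sub>M lborel)) = ennreal (dyadic_len (j - int (Suc m)) powr (- 2 * s))"
  (is "?I = _")
proof -
  let ?L = "dyadic_len j" and ?D = "dyadic_len (j - int (Suc m))"
  have L: "0 < ?L" and D: "0 < ?D" "?D = 2 ^ Suc m * ?L"
    by (simp_all only: dyadic_len_pos) (rule dyadic_len_diff)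
  have "?I = 2 * ennreal (dyadic_kernel s ?D / ?L) * ennreal ?L * ennreal (2 ^ m * ?L)"
    by (simp only: nn_integral_sym_indicator[OF lborel.sigma_finite_measure_axioms] sets_dyadic_interval
        sets_dyadic_shell emeasure_dyadic_interval emeasure_dyadic_shell)
  also have "\<dots> = ennreal (2 * (dyadic_kernel s ?D / ?L) * ?L * (2 ^ m * ?L))"
    using L D by (intro ennreal_triple_mult) (simp_all add: dyadic_kernel_nonneg)
  also have "2 * (dyadic_kernel s ?D / ?L) * ?L * (2 ^ m * ?L) = ?D * dyadic_kernel s ?D"
    using L D(2) by simp
  finally show ?thesis
    using D(1) by (simp add: dyadic_kernel_mult_self)
qed

lemma energy_haar_eq_series:
  "energy s (haar j k) = ennreal (2 * dyadic_len j powr (- 2 * s))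
     + (\<Sum>m. ennreal (dyadic_len (j - int (Suc m)) powr (- 2 * s)))"
proof -
  have "energy s (haar j k) = (\<integral>\<^sup>+ p. haar_energy_blocks s j k p \<partial>(lborel \<Otimes>\<^sub>M lborel))"
    by (simp add: energy_eq_nn_integral_density haar_energy_density_eq_blocks)
  also have "\<dots> = (\<integral>\<^sup>+ p. ennreal (4 / dyadic_len j * dyadic_kernel s (dyadic_len j))
        * sym_indicator (dyadic_interval (j + 1) (2 * k)) (dyadic_interval (j + 1) (2 * k + 1)) p
      \<partial>(lborel \<Otimes>\<^sub>M lborel))
    + (\<Sum>m. \<integral>\<^sup>+ p. ennreal (dyadic_kernel s (dyadic_len (j - int (Suc m))) / dyadic_len j)
        * sym_indicator (dyadic_interval j k) (dyadic_shell j k m) p \<partial>(lborel \<Otimes>\<^sub>M lborel))"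
    unfolding haar_energy_blocks_def
    by (subst nn_integral_add) (measurable, simp add: nn_integral_suminf)
  finally show ?thesis
    by (simp only: nn_integral_haar_children_block nn_integral_haar_shell_block)
qed

lemma suminf_dyadic_len_powr:
  assumes "a < 0"
  shows "(\<Sum>m. ennreal (dyadic_len (j - int (Suc m)) powr a))
    = ennreal (dyadic_len j powr a * (2 powr a / (1 - 2 powr a)))"
proof -
  define r where "r = (2::real) powr a"
  have r: "0 < r" "r < 1"
    using assms powr_less_mono[OF assms, of 2] unfolding r_def by simp_all
  have ancestor_powr: "dyadic_len (j - int (Suc m)) powr a = dyadic_len j powr a * r * r ^ m" for m
  proof -
    have "(2::real) ^ Suc m = 2 powr real (Suc m)"
      by (rule powr_realpow[symmetric]) simp
    then have "dyadic_len (j - int (Suc m)) powr a = (2 powr real (Suc m)) powr a * dyadic_len j powr a"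
      by (simp only: dyadic_len_diff powr_mult)
    also have "(2 powr real (Suc m)) powr a = r ^ Suc m"
      unfolding r_def powr_powr by (rule powr_power[symmetric]) simp
    finally show ?thesis
      by (simp only: power_Suc mult_ac)
  qed
  have sums: "(\<lambda>m. dyadic_len j powr a * r * r ^ m) sums (dyadic_len j powr a * r * (1 / (1 - r)))"
    using r by (intro sums_mult geometric_sums) simp
  have "(\<Sum>m. ennreal (dyadic_len (j - int (Suc m)) powr a)) = (\<Sum>m. ennreal (dyadic_len j powr a * r * r ^ m))"
    by (simp only: ancestor_powr)
  also have "\<dots> = ennreal (\<Sum>m. dyadic_len j powr a * r * r ^ m)"
    using r sums_summable[OF sums] by (intro suminf_ennreal2) simp_all
  also have "(\<Sum>m. dyadic_len j powr a * r * r ^ m) = dyadic_len j powr a * r * (1 / (1 - r))"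
    using sums by (rule sums_unique[symmetric])
  finally show ?thesis
    by (simp add: r_def)
qed

theorem lemma2p4:
  fixes s :: real and j :: int and k :: nat
  assumes "0 < s" and "s < 1/2"
  shows "energy s (haar j k) = ennreal (gamma2 s * dyadic_len j powr (- 2 * s))"
proof -
  define L' where "L' = dyadic_len j powr (- 2 * s)"
  define r where "r = (2::real) powr (- 2 * s)"
  have "- 2 * s < 0"
    using assms(1) by simp
  then have r: "0 < r" "r < 1"
    using powr_less_mono[of "- 2 * s" 0 2] unfolding r_def by simp_all
  have "energy s (haar j k) = ennreal (2 * L') + ennreal (L' * (r / (1 - r)))"
    unfolding energy_haar_eq_series suminf_dyadic_len_powr[OF \<open>- 2 * s < 0\<close>] L'_def r_def ..
  also have "\<dots> = ennreal (2 * L' + L' * (r / (1 - r)))"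
    using r by (intro ennreal_plus[symmetric]) (simp_all add: L'_def)
  also have "2 * L' + L' * (r / (1 - r)) = gamma2 s * L'"
    using r unfolding gamma2_def r_def[symmetric] by (simp add: field_simps)
  finally show ?thesis
    unfolding L'_def .
qed

end
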